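(* Let $m\ge t\ge 0$ be integers and let $\mathcal{D}_{test}$ be a finite test set. For each $\mathcal{J}\subseteq\{1,\dots,m\}$ with $|\mathcal{J}|=t$, let $A(\mathcal{J})$ be the fraction of test pairs $(\mathbf{c}_{test},y_{test})\in\mathcal{D}_{test}$ such that the clean ensemble prediction $y$ equals $y_{test}$ and $$N_y-\sum_{j\in\mathcal{J}}\mathbb{I}(p_j=y)\ge\max_{l\neq y}\Bigl(N_l+\mathbb{I}(y>l)+\sum_{j\in\mathcal{J}}\mathbb{I}(p_j\neq l)\Bigr),$$ where $p_j$ are the clean base predictions for $\mathbf{c}_{test}$ and $N_l$ the clean vote counts. Suppose an attack changes base predictions only for indices in a fixed set $\mathcal{J}_0$ with $|\mathcal{J}_0|\le t$, the same for all test points. Then the accuracy of the attacked ensemble on the attacked test set is at least $\min_{|\mathcal{J}|=t}A(\mathcal{J})$.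
   Context: Setting (ConceptGuard): concepts partitioned into $m$ disjoint groups; base classifier $f^j$ trained on group $j$; clean base predictions $p_j=f^j(\mathcal{G}^j(\mathbf{c}_{test});\mathcal{D}(\phi))$, clean vote counts $N_l=\sum_j\mathbb{I}(p_j=l)$, ensemble prediction $\arg\max_l N_l$ with ties broken toward the smallest label. An attack that "changes base predictions only for indices in $\mathcal{J}_0$" means the post-attack base predictions equal the clean ones for $j\notin\mathcal{J}_0$. $\mathbb{I}$ is the indicator function. *)

theory Defs
  imports Complex_Main
begin

(* Labels are 0..<K; base classifiers are indexed 1..m; a base prediction
   vector is p :: nat => nat (p j = prediction of base classifier j). *)

definition votes :: "nat \<Rightarrow> (nat \<Rightarrow> nat) \<Rightarrow> nat \<Rightarrow> nat" where
  "votes m p l = (\<Sum>j\<in>{1..m}. if p j = l then 1 else 0)"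

definition ens :: "nat \<Rightarrow> nat \<Rightarrow> (nat \<Rightarrow> nat) \<Rightarrow> nat" where
  "ens K m p = (LEAST l. l < K \<and> (\<forall>l'<K. votes m p l' \<le> votes m p l))"

definition certified :: "nat \<Rightarrow> nat \<Rightarrow> (nat \<Rightarrow> nat) \<Rightarrow> nat \<Rightarrow> nat set \<Rightarrow> bool" where
  "certified K m p y J \<longleftrightarrow>
     ens K m p = y \<and>
     (\<forall>l<K. l \<noteq> y \<longrightarrow>
        int (votes m p y) - (\<Sum>j\<in>J. if p j = y then 1 else 0)
          \<ge> int (votes m p l) + (if y > l then 1 else 0) + (\<Sum>j\<in>J. if p j \<noteq> l then 1 else 0))"

(* A(J): fraction of test pairs of D satisfying the condition;
   pred j c = prediction of base classifier j on concept vector c *)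
definition cert_frac :: "nat \<Rightarrow> nat \<Rightarrow> (nat \<Rightarrow> 'c \<Rightarrow> nat) \<Rightarrow> ('c \<times> nat) list \<Rightarrow> nat set \<Rightarrow> real" where
  "cert_frac K m pred D J =
     real (card {i. i < length D \<and> certified K m (\<lambda>j. pred j (fst (D ! i))) (snd (D ! i)) J})
     / real (length D)"

definition accuracy :: "nat \<Rightarrow> nat \<Rightarrow> (nat \<Rightarrow> 'c \<Rightarrow> nat) \<Rightarrow> ('c \<times> nat) list \<Rightarrow> real" where
  "accuracy K m pred D =
     real (card {i. i < length D \<and> ens K m (\<lambda>j. pred j (fst (D ! i))) = snd (D ! i)})
     / real (length D)"

end

theory Submission
  imports Defs
begin

text \<open>
  Extend the attacked index set \<open>J\<^sub>0\<close> to some \<open>J\<close> of size exactly \<open>t\<close>. On a test point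
  certified for \<open>J\<close>, changing the predictions indexed by \<open>J\<close> can take at most
  \<open>\<Sum>\<^sub>J \<bbbI>(p\<^sub>j = y)\<close> votes away from \<open>y\<close> and add at most \<open>\<Sum>\<^sub>J \<bbbI>(p\<^sub>j \<noteq> l)\<close> votes to
  any other label \<open>l\<close>, so \<open>y\<close> still wins the vote, including the tie-break. Hence the
  attacked accuracy is at least \<open>A(J)\<close>, and so at least the minimum over all \<open>J\<close>.
\<close>

lemma votes_change:
  assumes "J \<subseteq> {1..m}" and "\<forall>j\<in>{1..m} - J. p' j = p j"
  shows "int (votes m p' l) = int (votes m p l)
           - (\<Sum>j\<in>J. if p j = l then 1 else 0) + (\<Sum>j\<in>J. if p' j = l then 1 else 0)"
proof -
  have votes_split: "int (votes m q l) = (\<Sum>j\<in>{1..m} - J. if q j = l then 1 else 0)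
                 + (\<Sum>j\<in>J. if q j = l then 1 else 0)" for q
  proof -
    have "int (votes m q l) = (\<Sum>j\<in>{1..m}. if q j = l then 1 else 0)"
      unfolding votes_def by (simp add: of_nat_sum if_distrib cong: if_cong)
    also have "\<dots> = (\<Sum>j\<in>{1..m} - J. if q j = l then 1 else 0) + (\<Sum>j\<in>J. if q j = l then 1 else 0)"
      by (rule sum.subset_diff[OF assms(1) finite_atLeastAtMost])
    finally show ?thesis .
  qed
  have "(\<Sum>j\<in>{1..m} - J. if p' j = l then 1 else 0) = (\<Sum>j\<in>{1..m} - J. if p j = l then (1::int) else 0)"
    using assms(2) by (intro sum.cong) auto
  then show ?thesis using votes_split[of p] votes_split[of p'] by linarith
qed

lemma votes_lower_bound:
  assumes "J \<subseteq> {1..m}" and "\<forall>j\<in>{1..m} - J. p' j = p j"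
  shows "int (votes m p l) - (\<Sum>j\<in>J. if p j = l then 1 else 0) \<le> int (votes m p' l)"
proof -
  have "0 \<le> (\<Sum>j\<in>J. if p' j = l then 1 else (0::int))" by (intro sum_nonneg) auto
  then show ?thesis using votes_change[OF assms, of l] by linarith
qed

lemma votes_upper_bound:
  assumes "J \<subseteq> {1..m}" and "\<forall>j\<in>{1..m} - J. p' j = p j"
  shows "int (votes m p' l) \<le> int (votes m p l) + (\<Sum>j\<in>J. if p j \<noteq> l then 1 else 0)"
proof -
  have "(\<Sum>j\<in>J. if p' j = l then 1 else (0::int)) \<le> (\<Sum>j\<in>J. 1)" by (intro sum_mono) auto
  also have "\<dots> = (\<Sum>j\<in>J. if p j = l then 1 else 0) + (\<Sum>j\<in>J. if p j \<noteq> l then 1 else 0)"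
    unfolding sum.distrib[symmetric] by (rule sum.cong) auto
  finally show ?thesis using votes_change[OF assms, of l] by linarith
qed

lemma ens_eqI:
  assumes "y < K"
    and dominates: "\<And>l. l < K \<Longrightarrow> l \<noteq> y \<Longrightarrow>
                      votes m p l + (if y > l then 1 else 0) \<le> votes m p y"
  shows "ens K m p = y"
  unfolding ens_def
proof (rule Least_equality)
  have "votes m p l \<le> votes m p y" if "l < K" for l
    using dominates[of l] that by (cases "l = y") auto
  then show "y < K \<and> (\<forall>l<K. votes m p l \<le> votes m p y)"
    using \<open>y < K\<close> by blast
next
  fix l assume "l < K \<and> (\<forall>l'<K. votes m p l' \<le> votes m p l)"
  then show "y \<le> l"
    using \<open>y < K\<close> dominates[of l] by (cases "l = y") (auto split: if_splits)
qed

lemma certified_ens_unchanged: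
  assumes "J \<subseteq> {1..m}" and "\<forall>j\<in>{1..m} - J. p' j = p j"
    and "certified K m p y J" and "y < K"
  shows "ens K m p' = y"
proof (rule ens_eqI[OF \<open>y < K\<close>])
  fix l assume "l < K" "l \<noteq> y"
  then show "votes m p' l + (if y > l then 1 else 0) \<le> votes m p' y"
    using assms(3) votes_lower_bound[OF assms(1,2), of y] votes_upper_bound[OF assms(1,2), of l]
    unfolding certified_def by force
qed

lemma cert_frac_le_accuracy:
  assumes "length D' = length D"
    and "\<And>i. i < length D \<Longrightarrow> certified K m (\<lambda>j. pred j (fst (D ! i))) (snd (D ! i)) J \<Longrightarrow>
               ens K m (\<lambda>j. pred j (fst (D' ! i))) = snd (D' ! i)"
  shows "cert_frac K m pred D J \<le> accuracy K m pred D'"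
proof -
  have "card {i. i < length D \<and> certified K m (\<lambda>j. pred j (fst (D ! i))) (snd (D ! i)) J}
     \<le> card {i. i < length D' \<and> ens K m (\<lambda>j. pred j (fst (D' ! i))) = snd (D' ! i)}"
    using assms by (intro card_mono) auto
  then show ?thesis
    unfolding cert_frac_def accuracy_def using assms(1) by (simp add: divide_right_mono)
qed

lemma Min_cert_frac_le:
  assumes "J \<subseteq> {1..m}" and "card J = t"
  shows "Min {cert_frac K m pred D J | J. J \<subseteq> {1..m} \<and> card J = t} \<le> cert_frac K m pred D J"
proof (rule Min_le)
  have "{cert_frac K m pred D J | J. J \<subseteq> {1..m} \<and> card J = t} \<subseteq> cert_frac K m pred D ` Pow {1..m}"
    by auto
  then show "finite {cert_frac K m pred D J | J. J \<subseteq> {1..m} \<and> card J = t}"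
    by (rule finite_subset) simp
qed (use assms in auto)

theorem mainTheorem4:
  fixes m t K :: nat and pred :: "nat \<Rightarrow> 'c \<Rightarrow> nat"
    and D D' :: "('c \<times> nat) list" and J0 :: "nat set"
  assumes "t \<le> m" and "0 < K"
    and "\<forall>j\<in>{1..m}. \<forall>c. pred j c < K"
    and "\<forall>i<length D. snd (D ! i) < K"
    and "length D' = length D"
    and "\<forall>i<length D. snd (D' ! i) = snd (D ! i)"
    and "J0 \<subseteq> {1..m}" and "card J0 \<le> t"
    and "\<forall>i<length D. \<forall>j\<in>{1..m} - J0. pred j (fst (D' ! i)) = pred j (fst (D ! i))"
  shows "accuracy K m pred D' \<ge> Min {cert_frac K m pred D J | J. J \<subseteq> {1..m} \<and> card J = t}"
proof -
  obtain J where J: "J0 \<subseteq> J" "J \<subseteq> {1..m}" "card J = t"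
    using exists_subset_between[of J0 t "{1..m}"] assms(1,7,8) by auto
  have "cert_frac K m pred D J \<le> accuracy K m pred D'"
  proof (rule cert_frac_le_accuracy[OF assms(5)])
    fix i assume i: "i < length D"
      and cert: "certified K m (\<lambda>j. pred j (fst (D ! i))) (snd (D ! i)) J"
    have "ens K m (\<lambda>j. pred j (fst (D' ! i))) = snd (D ! i)"
      by (rule certified_ens_unchanged[OF J(2) _ cert]) (use i J(1) assms(4,9) in auto)
    then show "ens K m (\<lambda>j. pred j (fst (D' ! i))) = snd (D' ! i)"
      using i assms(6) by simp
  qed
  with Min_cert_frac_le[OF J(2,3), of K pred D] show ?thesis by linarith
qed

end
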